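(* Let $\mathbb{F}_2=\pi_1(\mathbb{C}\setminus\{-1,1\},0)$ be the free group on generators $a_1,a_2$. For $Y>0$ let $N^{\mathcal{L}_-}_{\mathcal{PB}_3}(Y)$ be the number of reduced words $w\in\mathbb{F}_2$, $w\neq \mathrm{Id}$, with $\mathcal{L}_-(w)\le Y$. Then for every $Y>0$, $$N^{\mathcal{L}_-}_{\mathcal{PB}_3}(Y)\le \tfrac12 e^{3Y}.$$
   Context: Write a reduced word $w\in\mathbb{F}_2$ as $w=a_{j_1}^{k_1}a_{j_2}^{k_2}\cdots$ with consecutive $j_i$ different and $k_i\neq0$; the factors $a_{j_i}^{k_i}$ are the terms of $w$. The syllables of $w$ are: each term with $|k_i|\ge2$ (syllable of first type), and each maximal sequence of consecutive terms with $|k_i|=1$ all having the same sign of exponent (syllable of second type). This gives a unique decomposition of $w$ into syllables. The degree of a syllable is the sum of the absolute values of the exponents of its terms. For $w\ne\mathrm{Id}$, $\mathcal{L}_-(w)=\sum_k\log(3d_k)$, where the sum runs over the degrees $d_k$ of all syllables of $w$. *)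

theory Defs
  imports Complex_Main
begin

text \<open>A reduced word in the free group on a_1, a_2 is represented by its list of terms
  (j, k), standing for a_j^k, with j in {1,2}, k nonzero and consecutive j different.\<close>

type_synonym fword = "(nat \<times> int) list"

definition reduced_word :: "fword \<Rightarrow> bool" where
  "reduced_word ts \<longleftrightarrow>
     (\<forall>t\<in>set ts. fst t \<in> {1, 2} \<and> snd t \<noteq> 0) \<and>
     successively (\<lambda>x y. fst x \<noteq> fst y) ts"

text \<open>A term with exponent of absolute value at least 2
  is a syllable of first type (degree = absolute value of exponent); a maximal run of
  consecutive terms with exponents all equal to +1 (or all equal to -1) is a syllable of
  second type (degree = length of the run).\<close>

function syllable_degrees :: "fword \<Rightarrow> nat list" where
  "syllable_degrees [] = []"
| "syllable_degrees ((j, k) # ts) =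
     (if \<bar>k\<bar> \<ge> 2 then nat \<bar>k\<bar> # syllable_degrees ts
      else (let r = length (takeWhile (\<lambda>t. snd t = k) ts)
            in (r + 1) # syllable_degrees (drop r ts)))"
  by pat_completeness auto
termination
  by (relation "measure length") (auto simp: Let_def)

definition L_minus :: "fword \<Rightarrow> real" where
  "L_minus ts = (\<Sum>d\<leftarrow>syllable_degrees ts. ln (3 * real d))"

definition N_Lminus_PB3 :: "real \<Rightarrow> nat" where
  "N_Lminus_PB3 Y = card {ts. reduced_word ts \<and> ts \<noteq> [] \<and> L_minus ts \<le> Y}"

end

theory Submission
  imports Defs
begin

text \<open>The weight \<open>exp (-3 * L_minus w)\<close> of a word is the product of \<open>(3 d)^-3\<close> over the
  degrees \<open>d\<close> of its syllables. A nonempty reduced word is determined by its first syllable and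
  the word that remains, and the first syllable is determined by its generator, its sign, its
  type and its degree. There are four syllables of degree 1 and eight of each degree \<open>d \<ge> 2\<close>,
  so, as \<open>\<zeta>(3) \<le> 3/2\<close>, the syllables have total weight at most \<open>(4/27) (2 \<zeta>(3) - 1) \<le> 8/27\<close>.
  Hence the total weight \<open>T\<close> of all nonempty reduced words satisfies \<open>T \<le> (8/27) (1 + T)\<close>,
  i.e. \<open>T \<le> 8/19 < 1/2\<close>, while every word with \<open>L_minus w \<le> Y\<close> has weight at least
  \<open>exp (-3 Y)\<close>.\<close>

fun head_syllable_degree :: "fword \<Rightarrow> nat" where
  "head_syllable_degree [] = 0"
| "head_syllable_degree ((j, k) # ts) =
     (if 2 \<le> \<bar>k\<bar> then nat \<bar>k\<bar> else length (takeWhile (\<lambda>t. snd t = k) ts) + 1)"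

fun syllable_tail :: "fword \<Rightarrow> fword" where
  "syllable_tail [] = []"
| "syllable_tail ((j, k) # ts) = (if 2 \<le> \<bar>k\<bar> then ts else dropWhile (\<lambda>t. snd t = k) ts)"

definition head_syllable_key :: "fword \<Rightarrow> nat \<times> int \<times> bool \<times> nat" where
  "head_syllable_key ts =
     (fst (hd ts), sgn (snd (hd ts)), 2 \<le> \<bar>snd (hd ts)\<bar>, head_syllable_degree ts)"

lemma head_syllable_degree_pos: "ts \<noteq> [] \<Longrightarrow> 0 < head_syllable_degree ts"
  by (cases ts) auto

lemma syllable_degrees_eq_Cons:
  "ts \<noteq> [] \<Longrightarrow> syllable_degrees ts = head_syllable_degree ts # syllable_degrees (syllable_tail ts)"
  by (cases ts) (auto simp: Let_def dropWhile_eq_drop)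

lemma exp_L_minus_eq_Cons:
  assumes "ts \<noteq> []"
  shows "exp (-3 * L_minus ts)
           = exp (-3 * L_minus (syllable_tail ts)) / (27 * real (head_syllable_degree ts) ^ 3)"
proof -
  have d: "0 < real (head_syllable_degree ts)"
    using head_syllable_degree_pos[OF assms] by simp
  have "L_minus ts = ln (3 * real (head_syllable_degree ts)) + L_minus (syllable_tail ts)"
    unfolding L_minus_def by (simp add: syllable_degrees_eq_Cons[OF assms])
  then have "exp (-3 * L_minus ts)
               = exp (-3 * L_minus (syllable_tail ts))
                   / exp (ln (3 * real (head_syllable_degree ts))) ^ 3"
    by (simp add: algebra_simps exp_add exp_diff exp_minus exp_of_nat_mult[symmetric] field_simps)
  with d show ?thesis
    by (simp add: power_mult_distrib)
qed

lemma reduced_word_Cons_tail: "reduced_word (t # ts) \<Longrightarrow> reduced_word ts"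
  by (auto simp: reduced_word_def successively_Cons)

lemma reduced_word_dropWhile: "reduced_word ts \<Longrightarrow> reduced_word (dropWhile P ts)"
  by (induction ts) (auto dest: reduced_word_Cons_tail)

lemma reduced_word_syllable_tail: "reduced_word ts \<Longrightarrow> reduced_word (syllable_tail ts)"
  by (cases ts rule: syllable_tail.cases)
    (auto intro: reduced_word_dropWhile dest: reduced_word_Cons_tail)

lemma length_syllable_tail_less: "ts \<noteq> [] \<Longrightarrow> length (syllable_tail ts) < length ts"
  by (cases ts rule: syllable_tail.cases) (auto simp: le_imp_less_Suc length_dropWhile_le)

lemma alternating_list_eqI:
  assumes "successively (\<noteq>) xs" "successively (\<noteq>) ys" "set xs \<subseteq> {a, b}" "set ys \<subseteq> {a, b}"
    and "hd xs = hd ys" "length xs = length ys"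
  shows "xs = ys"
  using assms
proof (induction xs arbitrary: ys rule: induct_list012)
  case 1
  then show ?case by simp
next
  case (2 x)
  then show ?case by (cases ys) auto
next
  case (3 x x' xs)
  then obtain y' ys' where "ys = x # y' # ys'"
    by (cases ys rule: remdups_adj.cases) auto
  with "3.prems" have "x' = y'"
    by auto
  with "3.IH"(2)[of "y' # ys'"] "3.prems" \<open>ys = x # y' # ys'\<close> show ?case
    by auto
qed

lemma reduced_word_appendD1: "reduced_word (xs @ ys) \<Longrightarrow> reduced_word xs"
  by (auto simp: reduced_word_def successively_append_iff)

lemma reduced_word_run_eqI:
  assumes "reduced_word (t # xs)" "reduced_word (t # ys)"
    and "\<forall>u \<in> set xs \<union> set ys. snd u = snd t" "length xs = length ys"
  shows "xs = ys"
proof -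
  have "map fst (t # xs) = map fst (t # ys)"
  proof (rule alternating_list_eqI[where a = 1 and b = 2])
    show "successively (\<noteq>) (map fst (t # xs))" "successively (\<noteq>) (map fst (t # ys))"
      using assms(1,2) unfolding successively_map by (simp_all add: reduced_word_def)
    show "set (map fst (t # xs)) \<subseteq> {1, 2}" "set (map fst (t # ys)) \<subseteq> {1, 2}"
      using assms(1,2) by (auto simp: reduced_word_def)
  qed (use assms(4) in auto)
  moreover have "map snd (t # xs) = map snd (t # ys)"
    using assms(3,4) by (intro nth_equalityI) (auto simp: nth_Cons split: nat.split)
  ultimately show ?thesis
    by (metis list.inject pair_list_eqI)
qed

lemma head_syllable_key_tail_inj:
  assumes "reduced_word ts" "reduced_word us" "ts \<noteq> []" "us \<noteq> []"
    and "head_syllable_key ts = head_syllable_key us" "syllable_tail ts = syllable_tail us"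
  shows "ts = us"
proof -
  obtain j k xs where ts: "ts = (j, k) # xs"
    using assms(3) by (cases ts) auto
  obtain j' k' ys where us: "us = (j', k') # ys"
    using assms(4) by (cases us) auto
  have "k \<noteq> 0" "k' \<noteq> 0"
    using assms(1,2) ts us by (auto simp: reduced_word_def)
  have key: "j = j'" "sgn k = sgn k'" "(2 \<le> \<bar>k\<bar>) = (2 \<le> \<bar>k'\<bar>)"
    "head_syllable_degree ts = head_syllable_degree us"
    using assms(5) ts us by (auto simp: head_syllable_key_def)
  show ?thesis
  proof (cases "2 \<le> \<bar>k\<bar>")
    case True
    with key ts us have "\<bar>k\<bar> = \<bar>k'\<bar>"
      by auto
    with key(2) have "k = k'"
      by (metis sgn_mult_abs)
    moreover from True key(3) assms(6) ts us have "xs = ys"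
      by auto
    ultimately show ?thesis
      using ts us key(1) by simp
  next
    case False
    with key(3) \<open>k \<noteq> 0\<close> \<open>k' \<noteq> 0\<close> have "\<bar>k\<bar> = 1" "\<bar>k'\<bar> = 1"
      by auto
    with key(2) have "k' = k"
      by (metis sgn_mult_abs mult_1_right)
    define P where "P = (\<lambda>t :: nat \<times> int. snd t = k)"
    have "takeWhile P xs = takeWhile P ys"
    proof (rule reduced_word_run_eqI)
      show "reduced_word ((j, k) # takeWhile P xs)" "reduced_word ((j, k) # takeWhile P ys)"
        using assms(1,2) ts us key(1) \<open>k' = k\<close>
        by (metis append_Cons reduced_word_appendD1 takeWhile_dropWhile_id)+
      show "\<forall>u \<in> set (takeWhile P xs) \<union> set (takeWhile P ys). snd u = snd (j, k)"
        by (auto simp: P_def dest: set_takeWhileD)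
      show "length (takeWhile P xs) = length (takeWhile P ys)"
        using False key(4) ts us \<open>k' = k\<close> by (simp add: P_def)
    qed
    moreover have "dropWhile P xs = dropWhile P ys"
      using False assms(6) ts us \<open>k' = k\<close> by (simp add: P_def)
    ultimately show ?thesis
      using ts us key(1) \<open>k' = k\<close> by (metis takeWhile_dropWhile_id)
  qed
qed

definition syllable_keys :: "nat \<Rightarrow> (nat \<times> int \<times> bool \<times> nat) set" where
  "syllable_keys M = {1, 2} \<times> {-1, 1} \<times> ({True} \<times> {2..M} \<union> {False} \<times> {1..M})"

lemma head_syllable_key_in_syllable_keys:
  assumes "reduced_word ts" "ts \<noteq> []" "head_syllable_degree ts \<le> M"
  shows "head_syllable_key ts \<in> syllable_keys M"
proof -
  obtain j k xs where ts: "ts = (j, k) # xs"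
    using assms(2) by (cases ts) auto
  with assms(1) have "j \<in> {1, 2}" "k \<noteq> 0"
    by (auto simp: reduced_word_def)
  with assms(3) ts show ?thesis
    by (auto simp: head_syllable_key_def syllable_keys_def sgn_if)
qed

lemma sum_inverse_cubes_le: "1 \<le> M \<Longrightarrow> (\<Sum>d = 1..M. 1 / real d ^ 3) \<le> 3/2 - 1 / (2 * real M)"
proof (induction M rule: nat_induct_at_least)
  case base
  then show ?case by simp
next
  case (Suc M)
  have M: "1 \<le> real M"
    using Suc by simp
  have "2 * real M * (real M + 1) \<le> (real M + 1) ^ 3"
    using M by (simp add: power3_eq_cube algebra_simps)
  then have "1 / (real M + 1) ^ 3 \<le> 1 / (2 * real M * (real M + 1))"
    using M by (intro divide_left_mono) auto
  also have "\<dots> = 1 / (2 * real M) - 1 / (2 * (real M + 1))"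
    using M by (simp add: field_simps)
  finally show ?case
    using Suc.IH by (simp add: add.commute)
qed

lemma sum_syllable_keys_le:
  "(\<Sum>(_, _, _, d) \<in> syllable_keys M. 1 / (27 * real d ^ 3)) \<le> 8/27"
proof -
  define S where "S m = (\<Sum>d = m..M. 1 / (27 * real d ^ 3))" for m
  have "(\<Sum>(_, d) \<in> {True} \<times> {2..M} \<union> {False} \<times> {1..M}. 1 / (27 * real d ^ 3)) = S 2 + S 1"
    by (subst sum.union_disjoint) (auto simp: S_def sum.cartesian_product[symmetric])
  then have "(\<Sum>(_, _, _, d) \<in> syllable_keys M. 1 / (27 * real d ^ 3)) = 4 * (S 2 + S 1)"
    by (simp add: syllable_keys_def sum.cartesian_product[symmetric])
  also have "\<dots> \<le> 8/27"
  proof (cases "1 \<le> M")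
    case True
    then have "S 1 = 1/27 + S 2"
      by (simp add: S_def sum.atLeast_Suc_atMost numeral_2_eq_2)
    moreover have "S 1 = (\<Sum>d = 1..M. 1 / real d ^ 3) / 27"
      by (simp add: S_def sum_divide_distrib mult.commute)
    moreover have "(\<Sum>d = 1..M. 1 / real d ^ 3) \<le> 3/2"
    proof -
      have "0 \<le> 1 / (2 * real M)"
        by simp
      with sum_inverse_cubes_le[OF True] show ?thesis
        by linarith
    qed
    ultimately show ?thesis
      by simp
  qed (simp add: S_def)
  finally show ?thesis .
qed

lemma sum_exp_L_minus_same_head_key:
  assumes "\<forall>ts \<in> F. reduced_word ts \<and> ts \<noteq> [] \<and> head_syllable_key ts = (j, s, b, d)"
  shows "(\<Sum>ts \<in> F. exp (-3 * L_minus ts))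
           = (\<Sum>u \<in> syllable_tail ` F. exp (-3 * L_minus u)) / (27 * real d ^ 3)"
proof -
  have "inj_on syllable_tail F"
    using assms head_syllable_key_tail_inj by (metis inj_onI)
  then have "(\<Sum>u \<in> syllable_tail ` F. exp (-3 * L_minus u))
               = (\<Sum>ts \<in> F. exp (-3 * L_minus (syllable_tail ts)))"
    by (rule sum.reindex[unfolded comp_def])
  moreover have "exp (-3 * L_minus ts) = exp (-3 * L_minus (syllable_tail ts)) / (27 * real d ^ 3)"
    if "ts \<in> F" for ts
    using assms that exp_L_minus_eq_Cons[of ts] by (simp add: head_syllable_key_def)
  ultimately show ?thesis
    by (simp add: sum_divide_distrib)
qed

lemma sum_exp_L_minus_le_recursive:
  assumes "finite F" "\<forall>ts \<in> F. reduced_word ts \<and> ts \<noteq> []"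
    and tails: "\<And>G. G \<subseteq> syllable_tail ` F - {[]} \<Longrightarrow> (\<Sum>u \<in> G. exp (-3 * L_minus u)) \<le> B"
  shows "(\<Sum>ts \<in> F. exp (-3 * L_minus ts)) \<le> 8/27 * (1 + B)"
proof -
  define M where "M = Max (head_syllable_degree ` F)"
  define fiber where "fiber \<kappa> = {ts \<in> F. head_syllable_key ts = \<kappa>}" for \<kappa>
  have keys: "head_syllable_key ` F \<subseteq> syllable_keys M"
    using assms(1,2) by (auto simp: M_def intro!: head_syllable_key_in_syllable_keys)
  have "0 \<le> B"
    using tails[of "{}"] by simp
  have fiber_tails: "(\<Sum>u \<in> syllable_tail ` fiber \<kappa>. exp (-3 * L_minus u)) \<le> 1 + B" for \<kappa>
  proof -
    let ?T = "syllable_tail ` fiber \<kappa>"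
    have "finite ?T"
      using assms(1) by (simp add: fiber_def)
    have "(\<Sum>u \<in> ?T \<inter> {[]}. exp (-3 * L_minus u)) \<le> 1"
      by (cases "[] \<in> ?T") (auto simp: L_minus_def)
    moreover have "(\<Sum>u \<in> ?T - {[]}. exp (-3 * L_minus u)) \<le> B"
      by (rule tails) (auto simp: fiber_def)
    ultimately show ?thesis
      by (simp add: sum.Int_Diff[OF \<open>finite ?T\<close>, of _ "{[]}"])
  qed
  have fiber_le: "(\<Sum>ts \<in> fiber (j, s, b, d). exp (-3 * L_minus ts)) \<le> (1 + B) / (27 * real d ^ 3)"
    for j s b d
  proof -
    have "(\<Sum>ts \<in> fiber (j, s, b, d). exp (-3 * L_minus ts))
            = (\<Sum>u \<in> syllable_tail ` fiber (j, s, b, d). exp (-3 * L_minus u)) / (27 * real d ^ 3)"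
      using assms(2) by (intro sum_exp_L_minus_same_head_key[where j = j and s = s and b = b])
        (simp add: fiber_def)
    also have "\<dots> \<le> (1 + B) / (27 * real d ^ 3)"
      using fiber_tails by (rule divide_right_mono) simp
    finally show ?thesis .
  qed
  have "(\<Sum>ts \<in> F. exp (-3 * L_minus ts))
          = (\<Sum>\<kappa> \<in> syllable_keys M. \<Sum>ts \<in> fiber \<kappa>. exp (-3 * L_minus ts))"
    using sum.group[OF assms(1) _ keys, of "\<lambda>ts. exp (-3 * L_minus ts)"]
    by (simp add: syllable_keys_def fiber_def)
  also have "\<dots> \<le> (\<Sum>(_, _, _, d) \<in> syllable_keys M. (1 + B) / (27 * real d ^ 3))"
    by (rule sum_mono) (use fiber_le in auto)
  also have "\<dots> = (1 + B) * (\<Sum>(_, _, _, d) \<in> syllable_keys M. 1 / (27 * real d ^ 3))"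
    by (simp add: sum_distrib_left case_prod_beta)
  also have "\<dots> \<le> (1 + B) * (8/27)"
    using sum_syllable_keys_le \<open>0 \<le> B\<close> by (intro mult_left_mono) auto
  finally show ?thesis
    by simp
qed

lemma sum_exp_L_minus_le:
  assumes "finite F" "\<forall>ts \<in> F. reduced_word ts \<and> ts \<noteq> []"
  shows "(\<Sum>ts \<in> F. exp (-3 * L_minus ts)) \<le> 8/19"
proof -
  obtain n where "\<forall>ts \<in> F. length ts \<le> n"
    using assms(1) by (metis finite_imageI finite_nat_set_iff_bounded_le image_eqI)
  with assms show ?thesis
  proof (induction n arbitrary: F)
    case 0
    then show ?case by simp
  next
    case (Suc n)
    have "(\<Sum>ts \<in> F. exp (-3 * L_minus ts)) \<le> 8/27 * (1 + 8/19)"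
    proof (rule sum_exp_L_minus_le_recursive[OF Suc.prems(1,2)])
      fix G
      assume G: "G \<subseteq> syllable_tail ` F - {[]}"
      then have "finite G"
        using Suc.prems(1) finite_subset by blast
      moreover have "reduced_word u \<and> u \<noteq> [] \<and> length u \<le> n" if "u \<in> G" for u
      proof -
        from G that obtain ts where "ts \<in> F" "u = syllable_tail ts" "u \<noteq> []"
          by blast
        with Suc.prems(2,3) show ?thesis
          using reduced_word_syllable_tail length_syllable_tail_less by fastforce
      qed
      ultimately show "(\<Sum>u \<in> G. exp (-3 * L_minus u)) \<le> 8/19"
        by (intro Suc.IH) auto
    qed
    then show ?case
      by simp
  qed
qed

theorem lemma1:
  fixes Y :: real
  assumes "Y > 0"
  shows "real (N_Lminus_PB3 Y) \<le> exp (3 * Y) / 2"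
proof -
  define S where "S = {ts. reduced_word ts \<and> ts \<noteq> [] \<and> L_minus ts \<le> Y}"
  have "real (card S) \<le> exp (3 * Y) * (8/19)"
  proof (cases "finite S")
    case True
    have "real (card S) = (\<Sum>ts \<in> S. 1)"
      by simp
    also have "\<dots> \<le> (\<Sum>ts \<in> S. exp (3 * Y) * exp (-3 * L_minus ts))"
      by (rule sum_mono) (simp add: S_def flip: exp_add)
    also have "\<dots> = exp (3 * Y) * (\<Sum>ts \<in> S. exp (-3 * L_minus ts))"
      by (simp add: sum_distrib_left)
    also have "\<dots> \<le> exp (3 * Y) * (8/19)"
      using True by (intro mult_left_mono sum_exp_L_minus_le) (auto simp: S_def)
    finally show ?thesis .
  qed simp
  then show ?thesis
    by (simp add: N_Lminus_PB3_def S_def)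
qed

end
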